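(* Let $R$ be a countable, cotorsion-free commutative ring. If $A$ and $B$ are torsion-free countable $R$-modules and $H=\mathrm{Hom}_R(A,B)$ is uncountable, then $H$ contains a submodule isomorphic to $R^\omega$ (the product of $\omega$ copies of $R$).
   Context: An $R$-module $B$ is torsion-free if $bs=0$ with $b\in B$ and $0\ne s\in R$ implies $b=0$. Cotorsion-free is with respect to a countable multiplicative subset $\mathbb{S}\subseteq R$ ($0\notin\mathbb{S}$, $1\in\mathbb{S}$): $R$ is $\mathbb{S}$-reduced ($\bigcap_{s\in\mathbb{S}}sR=0$), $\mathbb{S}$-torsion-free, and $\mathrm{Hom}_R(\widehat R,R)=0$ for the $\mathbb{S}$-adic completion $\widehat R$. *)

theory Defs
  imports Main "HOL.Modules" "HOL-Library.Countable_Set" "HOL-Library.Function_Algebras"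
begin

definition mult_subset :: "'r::comm_ring_1 set \<Rightarrow> bool" where
  "mult_subset S \<longleftrightarrow> 1 \<in> S \<and> 0 \<notin> S \<and> (\<forall>s\<in>S. \<forall>t\<in>S. s * t \<in> S)"

definition coset_mod :: "'r::comm_ring_1 \<Rightarrow> 'r \<Rightarrow> 'r set" where
  "coset_mod s r = {r + s * t | t. True}"

text \<open>The S-adic completion of R, realised as the inverse limit of the R/sR (s in S),
  indexed by S preordered by divisibility: compatible families of cosets.\<close>
definition completion :: "'r::comm_ring_1 set \<Rightarrow> ('r \<Rightarrow> 'r set) set" where
  "completion S = {x. (\<forall>s\<in>S. \<exists>r. x s = coset_mod s r)
      \<and> (\<forall>s\<in>S. \<forall>t\<in>S. s dvd t \<longrightarrow> x t \<subseteq> x s)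
      \<and> (\<forall>s. s \<notin> S \<longrightarrow> x s = {})}"

definition compl_add :: "'r::comm_ring_1 set \<Rightarrow> ('r \<Rightarrow> 'r set) \<Rightarrow> ('r \<Rightarrow> 'r set) \<Rightarrow> ('r \<Rightarrow> 'r set)" where
  "compl_add S x y = (\<lambda>s. if s \<in> S then {a + b | a b. a \<in> x s \<and> b \<in> y s} else {})"

definition compl_scale :: "'r::comm_ring_1 set \<Rightarrow> 'r \<Rightarrow> ('r \<Rightarrow> 'r set) \<Rightarrow> ('r \<Rightarrow> 'r set)" where
  "compl_scale S r x = (\<lambda>s. if s \<in> S then {r * a + s * t | a t. a \<in> x s} else {})"

definition hom_completion_zero :: "'r::comm_ring_1 set \<Rightarrow> bool" where
  "hom_completion_zero S \<longleftrightarrow>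
     (\<forall>h :: ('r \<Rightarrow> 'r set) \<Rightarrow> 'r.
        (\<forall>x\<in>completion S. \<forall>y\<in>completion S. h (compl_add S x y) = h x + h y)
        \<and> (\<forall>r. \<forall>x\<in>completion S. h (compl_scale S r x) = r * h x)
        \<longrightarrow> (\<forall>x\<in>completion S. h x = 0))"

definition cotorsion_free :: "'r::comm_ring_1 set \<Rightarrow> bool" where
  "cotorsion_free S \<longleftrightarrow> countable S \<and> mult_subset S
     \<and> (\<Inter>s\<in>S. {s * r | r. True}) = {0}
     \<and> (\<forall>s\<in>S. \<forall>r. s * r = 0 \<longrightarrow> r = 0)
     \<and> hom_completion_zero S"

definition torsion_free :: "('r::comm_ring_1 \<Rightarrow> 'a::ab_group_add \<Rightarrow> 'a) \<Rightarrow> bool" where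
  "torsion_free sc \<longleftrightarrow> (\<forall>b s. s \<noteq> 0 \<longrightarrow> sc s b = 0 \<longrightarrow> b = 0)"

definition Hom :: "('r::comm_ring_1 \<Rightarrow> 'a::ab_group_add \<Rightarrow> 'a) \<Rightarrow> ('r \<Rightarrow> 'b::ab_group_add \<Rightarrow> 'b) \<Rightarrow> ('a \<Rightarrow> 'b) set" where
  "Hom sA sB = {f. module_hom sA sB f}"

definition hom_scale :: "('r::comm_ring_1 \<Rightarrow> 'b::ab_group_add \<Rightarrow> 'b) \<Rightarrow> 'r \<Rightarrow> ('a \<Rightarrow> 'b) \<Rightarrow> ('a \<Rightarrow> 'b)" where
  "hom_scale sB r f = (\<lambda>a. sB r (f a))"

definition omega_scale :: "'r::comm_ring_1 \<Rightarrow> (nat \<Rightarrow> 'r) \<Rightarrow> (nat \<Rightarrow> 'r)" where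
  "omega_scale r x = (\<lambda>n. r * x n)"

end

theory Submission
  imports Defs
begin

text \<open>Since \<open>B\<close> is countable, homomorphisms restricted to a finite set \<open>F \<subseteq> A\<close> take only
  countably many values, so two distinct members of the uncountable \<open>Hom(A, B)\<close> agree on \<open>F\<close> and
  their difference is a nonzero homomorphism vanishing on \<open>F\<close>. Enumerating \<open>A\<close> as \<open>e 0, e 1, \<dots>\<close>
  and taking \<open>F\<close> to be initial segments produces homomorphisms \<open>g\<^sub>n\<close> with strictly increasing pivots
  \<open>p\<^sub>n\<close>: \<open>g\<^sub>n p\<^sub>n \<noteq> 0\<close> and \<open>g\<^sub>m p\<^sub>n = 0\<close> for \<open>m > n\<close>, each \<open>a\<close> being killed by almost all \<open>g\<^sub>n\<close>. Hence
  \<open>x \<mapsto> \<Sum>\<^sub>n x\<^sub>n g\<^sub>n\<close> is a well-defined linear map \<open>R\<^sup>\<omega> \<rightarrow> Hom(A, B)\<close>; evaluating at the pivot of the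
  first nonzero coordinate of \<open>x\<close> and using that \<open>B\<close> is torsion-free shows it is injective.\<close>

lemma module_omega_scale: "module (omega_scale :: 'r::comm_ring_1 \<Rightarrow> (nat \<Rightarrow> 'r) \<Rightarrow> _)"
  by unfold_locales (auto simp: omega_scale_def algebra_simps fun_eq_iff)

lemma module_hom_scale:
  assumes "module (sB :: 'r::comm_ring_1 \<Rightarrow> 'b::ab_group_add \<Rightarrow> 'b)"
  shows "module (hom_scale sB :: 'r \<Rightarrow> ('a \<Rightarrow> 'b) \<Rightarrow> _)"
  using assms by unfold_locales
    (auto simp: hom_scale_def fun_eq_iff module.scale_right_distrib module.scale_left_distrib
      module.scale_scale module.scale_one)

lemma Hom_diff: "f \<in> Hom sA sB \<Longrightarrow> g \<in> Hom sA sB \<Longrightarrow> f - g \<in> Hom sA sB"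
  unfolding Hom_def module_hom_iff
  by (auto simp: module.scale_right_diff_distrib algebra_simps)

lemma uncountable_Hom_vanishing_nonzero:
  fixes sA :: "'r::comm_ring_1 \<Rightarrow> 'a::ab_group_add \<Rightarrow> 'a"
    and sB :: "'r \<Rightarrow> 'b::ab_group_add \<Rightarrow> 'b"
  assumes "countable (UNIV :: 'b set)" and "\<not> countable (Hom sA sB)" and "finite F"
  shows "\<exists>f\<in>Hom sA sB. f \<noteq> 0 \<and> (\<forall>a\<in>F. f a = 0)"
proof -
  obtain xs where xs: "set xs = F"
    using \<open>finite F\<close> finite_list by blast
  have "countable ((\<lambda>f. map f xs) ` Hom sA sB)"
    by (rule countable_subset[OF _ countable_lists[OF \<open>countable UNIV\<close>]]) auto
  then have "\<not> inj_on (\<lambda>f. map f xs) (Hom sA sB)"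
    using assms(2) countable_image_inj_on by blast
  then obtain f g where "f \<in> Hom sA sB" "g \<in> Hom sA sB" "f \<noteq> g" "map f xs = map g xs"
    unfolding inj_on_def by blast
  then show ?thesis
    using xs Hom_diff by (intro bexI[of _ "f - g"]) (auto simp: map_eq_conv)
qed

lemma infinite_Hom_pivots:
  fixes sA :: "'r::comm_ring_1 \<Rightarrow> 'a::ab_group_add \<Rightarrow> 'a"
    and sB :: "'r \<Rightarrow> 'b::ab_group_add \<Rightarrow> 'b"
    and e :: "nat \<Rightarrow> 'a"
  assumes "countable (UNIV :: 'b set)" and "\<not> countable (Hom sA sB)" and "surj e"
  shows "infinite {j. \<exists>f\<in>Hom sA sB. (\<forall>i<j. f (e i) = 0) \<and> f (e j) \<noteq> 0}"
  unfolding infinite_nat_iff_unbounded_le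
proof
  fix m
  obtain f where f: "f \<in> Hom sA sB" "f \<noteq> 0" and vanish: "\<forall>i<m. f (e i) = 0"
    using uncountable_Hom_vanishing_nonzero[OF assms(1,2), of "e ` {..<m}"] by auto
  have "\<exists>j. f (e j) \<noteq> 0"
    using f(2) \<open>surj e\<close> by (metis ext surj_f_inv_f zero_fun_def)
  define j where "j = (LEAST j. f (e j) \<noteq> 0)"
  have "f (e j) \<noteq> 0" and "\<forall>i<j. f (e i) = 0"
    unfolding j_def using LeastI_ex[OF \<open>\<exists>j. f (e j) \<noteq> 0\<close>] not_less_Least by blast+
  moreover have "m \<le> j"
    using \<open>f (e j) \<noteq> 0\<close> vanish not_le by blast
  ultimately show "\<exists>j\<ge>m. j \<in> {j. \<exists>f\<in>Hom sA sB. (\<forall>i<j. f (e i) = 0) \<and> f (e j) \<noteq> 0}"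
    using f(1) by blast
qed

text \<open>The series \<open>\<Sum>\<^sub>n x\<^sub>n g\<^sub>n\<close>, summed at each point \<open>a\<close> over \<open>{n. g n a \<noteq> 0}\<close>; where that set is
  infinite the value is the junk \<open>0\<close>.\<close>
definition hom_series ::
    "('r::comm_ring_1 \<Rightarrow> 'b::ab_group_add \<Rightarrow> 'b) \<Rightarrow> (nat \<Rightarrow> 'a \<Rightarrow> 'b) \<Rightarrow> (nat \<Rightarrow> 'r) \<Rightarrow> 'a \<Rightarrow> 'b" where
  "hom_series sB g x a = (\<Sum>n | g n a \<noteq> 0. sB (x n) (g n a))"

lemma hom_series_eq_sum:
  assumes "module sB" and "finite N" and "{n. g n a \<noteq> 0} \<subseteq> N"
  shows "hom_series sB g x a = (\<Sum>n\<in>N. sB (x n) (g n a))"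
  unfolding hom_series_def
  using assms by (intro sum.mono_neutral_left) (auto simp: module.scale_zero_right)

lemma module_hom_hom_series:
  assumes "module sB"
  shows "module_hom omega_scale (hom_scale sB) (hom_series sB g)"
  unfolding module_hom_iff
proof (intro conjI module_omega_scale module_hom_scale[OF assms] allI)
  show "hom_series sB g (x + y) = hom_series sB g x + hom_series sB g y" for x y
    by (auto simp: fun_eq_iff hom_series_def module.scale_left_distrib[OF assms] sum.distrib)
  show "hom_series sB g (omega_scale r x) = hom_scale sB r (hom_series sB g x)" for r x
    by (simp add: fun_eq_iff hom_series_def omega_scale_def hom_scale_def
        module.scale_sum_right[OF assms] module.scale_scale[OF assms])
qed

lemma hom_series_in_Hom:
  assumes "module sA" and "module sB" and "\<And>n. g n \<in> Hom sA sB"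
    and finite_support: "\<And>a. finite {n. g n a \<noteq> 0}"
  shows "hom_series sB g x \<in> Hom sA sB"
proof -
  have g_add: "g n (a + b) = g n a + g n b" and g_scale: "g n (sA r a) = sB r (g n a)"
    for n a b r using assms(3)[of n] by (simp_all add: Hom_def module_hom_iff)
  show ?thesis
    unfolding Hom_def mem_Collect_eq module_hom_iff
  proof (intro conjI assms(1,2) allI)
    fix a b
    define N where "N = {n. g n a \<noteq> 0} \<union> {n. g n b \<noteq> 0} \<union> {n. g n (a + b) \<noteq> 0}"
    have "finite N" and "{n. g n a \<noteq> 0} \<subseteq> N" "{n. g n b \<noteq> 0} \<subseteq> N" "{n. g n (a + b) \<noteq> 0} \<subseteq> N"
      unfolding N_def using finite_support by auto
    then show "hom_series sB g x (a + b) = hom_series sB g x a + hom_series sB g x b"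
      by (simp add: hom_series_eq_sum[OF assms(2)] g_add module.scale_right_distrib[OF assms(2)]
          sum.distrib)
  next
    fix r a
    define N where "N = {n. g n a \<noteq> 0} \<union> {n. g n (sA r a) \<noteq> 0}"
    have "finite N" and "{n. g n a \<noteq> 0} \<subseteq> N" "{n. g n (sA r a) \<noteq> 0} \<subseteq> N"
      unfolding N_def using finite_support by auto
    then show "hom_series sB g x (sA r a) = sB r (hom_series sB g x a)"
      by (simp add: hom_series_eq_sum[OF assms(2)] g_scale module.scale_sum_right[OF assms(2)]
          module.scale_left_commute[OF assms(2)])
  qed
qed

lemma inj_hom_series:
  assumes "module sB" and "torsion_free sB"
    and pivot: "\<And>n. g n (p n) \<noteq> 0" and below_pivot: "\<And>n m. n < m \<Longrightarrow> g m (p n) = 0"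
  shows "inj (hom_series sB g)"
proof -
  interpret module_hom omega_scale "hom_scale sB" "hom_series sB g"
    by (rule module_hom_hom_series[OF assms(1)])
  show ?thesis
    unfolding inj_iff_eq_0
  proof (intro allI impI, rule ccontr)
    fix x assume zero: "hom_series sB g x = 0" and "x \<noteq> 0"
    then have "\<exists>n. x n \<noteq> 0" by (simp add: fun_eq_iff)
    define m where "m = (LEAST n. x n \<noteq> 0)"
    have "x m \<noteq> 0" and before: "\<And>n. n < m \<Longrightarrow> x n = 0"
      unfolding m_def using LeastI_ex[OF \<open>\<exists>n. x n \<noteq> 0\<close>] not_less_Least by blast+
    have "{n. g n (p m) \<noteq> 0} \<subseteq> {..m}"
    proof
      fix n assume "n \<in> {n. g n (p m) \<noteq> 0}"
      then show "n \<in> {..m}"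
        using below_pivot[of m n] by (cases "m < n") auto
    qed
    then have "hom_series sB g x (p m) = (\<Sum>n\<in>{..m}. sB (x n) (g n (p m)))"
      by (rule hom_series_eq_sum[OF assms(1) finite_atMost])
    also have "\<dots> = (\<Sum>n<m. sB (x n) (g n (p m))) + sB (x m) (g m (p m))"
      by (simp add: lessThan_Suc_atMost[symmetric])
    also have "\<dots> = sB (x m) (g m (p m))"
      by (simp add: before module.scale_zero_left[OF assms(1)])
    finally have "sB (x m) (g m (p m)) = 0"
      using zero by simp
    then show False
      using \<open>x m \<noteq> 0\<close> pivot[of m] \<open>torsion_free sB\<close> unfolding torsion_free_def by blast
  qed
qed

lemma uncountable_Hom_triangular_sequence:
  fixes sA :: "'r::comm_ring_1 \<Rightarrow> 'a::ab_group_add \<Rightarrow> 'a"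
    and sB :: "'r \<Rightarrow> 'b::ab_group_add \<Rightarrow> 'b"
  assumes "countable (UNIV :: 'a set)" and "countable (UNIV :: 'b set)"
    and "\<not> countable (Hom sA sB)"
  shows "\<exists>(g :: nat \<Rightarrow> 'a \<Rightarrow> 'b) p. (\<forall>n. g n \<in> Hom sA sB) \<and> (\<forall>a. finite {n. g n a \<noteq> 0})
           \<and> (\<forall>n. g n (p n) \<noteq> 0) \<and> (\<forall>n m. n < m \<longrightarrow> g m (p n) = 0)"
proof -
  define e :: "nat \<Rightarrow> 'a" where "e = from_nat_into UNIV"
  have "surj e"
    unfolding e_def using range_from_nat_into[OF UNIV_not_empty assms(1)] .
  obtain k :: "nat \<Rightarrow> nat" where "strict_mono k"
    and pivots: "\<forall>n. \<exists>f. f \<in> Hom sA sB \<and> (\<forall>i<k n. f (e i) = 0) \<and> f (e (k n)) \<noteq> 0"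
    using infinite_enumerate[OF infinite_Hom_pivots[OF assms(2,3) \<open>surj e\<close>]]
    unfolding mem_Collect_eq Bex_def by blast
  from pivots have "\<exists>g. \<forall>n. g n \<in> Hom sA sB \<and> (\<forall>i<k n. g n (e i) = 0) \<and> g n (e (k n)) \<noteq> 0"
    by (rule choice)
  then obtain g where "\<forall>n. g n \<in> Hom sA sB \<and> (\<forall>i<k n. g n (e i) = 0) \<and> g n (e (k n)) \<noteq> 0" ..
  then have g: "\<And>n. g n \<in> Hom sA sB" and vanish: "\<And>n i. i < k n \<Longrightarrow> g n (e i) = 0"
    and pivot: "\<And>n. g n (e (k n)) \<noteq> 0"
    by simp_all
  have "finite {n. g n a \<noteq> 0}" for a
  proof -
    obtain j where "a = e j"
      using surjD[OF \<open>surj e\<close>] by blast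
    have "g n a = 0" if "j < n" for n
    proof -
      have "j < k n"
        using that strict_mono_imp_increasing[OF \<open>strict_mono k\<close>, of n] by linarith
      then show ?thesis
        using vanish \<open>a = e j\<close> by blast
    qed
    then have "{n. g n a \<noteq> 0} \<subseteq> {..j}"
      using not_le by auto
    then show ?thesis
      using finite_subset by blast
  qed
  moreover have "g m (e (k n)) = 0" if "n < m" for n m
    using vanish strict_monoD[OF \<open>strict_mono k\<close> that] by blast
  ultimately have "(\<forall>n. g n \<in> Hom sA sB) \<and> (\<forall>a. finite {n. g n a \<noteq> 0})
      \<and> (\<forall>n. g n (e (k n)) \<noteq> 0) \<and> (\<forall>n m. n < m \<longrightarrow> g m (e (k n)) = 0)"
    using g pivot by blast
  then show ?thesis
    by (rule exI[of _ g, OF exI[of _ "\<lambda>n. e (k n)"]])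
qed

theorem lemma3p18:
  fixes S :: "'r::comm_ring_1 set"
    and sA :: "'r \<Rightarrow> 'a::ab_group_add \<Rightarrow> 'a"
    and sB :: "'r \<Rightarrow> 'b::ab_group_add \<Rightarrow> 'b"
  assumes "countable (UNIV :: 'r set)"
    and "cotorsion_free S"
    and "module sA" and "module sB"
    and "torsion_free sA" and "torsion_free sB"
    and "countable (UNIV :: 'a set)" and "countable (UNIV :: 'b set)"
    and "\<not> countable (Hom sA sB)"
  shows "\<exists>\<phi> :: (nat \<Rightarrow> 'r) \<Rightarrow> ('a \<Rightarrow> 'b).
           module_hom omega_scale (hom_scale sB) \<phi> \<and> inj \<phi> \<and> range \<phi> \<subseteq> Hom sA sB"
proof -
  obtain g :: "nat \<Rightarrow> 'a \<Rightarrow> 'b" and p where g: "\<And>n. g n \<in> Hom sA sB"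
    and finite_support: "\<And>a. finite {n. g n a \<noteq> 0}"
    and pivot: "\<And>n. g n (p n) \<noteq> 0" and below_pivot: "\<And>n m. n < m \<Longrightarrow> g m (p n) = 0"
    using uncountable_Hom_triangular_sequence[OF assms(7-9)] by blast
  have "module_hom omega_scale (hom_scale sB) (hom_series sB g)"
    by (rule module_hom_hom_series[OF assms(4)])
  moreover have "inj (hom_series sB g)"
    using inj_hom_series[OF assms(4,6), of g p] pivot below_pivot by blast
  moreover have "range (hom_series sB g) \<subseteq> Hom sA sB"
    using hom_series_in_Hom[OF assms(3,4) g finite_support] by blast
  ultimately show ?thesis
    by blast
qed

end
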